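(* Let $G$ be a finite simple graph and $H$ a subgraph of $G$. Then $a_i(H)\le a_i(G)$ for all $i\ge0$. In particular, if $H$ is a spanning subgraph of $G$, then $a(H)\le a(G)$.
   Context: All graphs are finite simple graphs; $G|_I$ is the induced subgraph on $I\subseteq V(G)$. The signed $a$-number: $sa(\emptyset)=1$ for the null graph; if $G$ has connected components $G_1,\dots,G_\ell$, $sa(G)=\prod_k sa(G_k)$; if $G$ is connected and nonempty, $sa(G)=-\sum_{I\subsetneq V(G)}sa(G|_I)$ when $|V(G)|$ is even and $sa(G)=0$ when $|V(G)|$ is odd. The $a$-number is $a(G)=|sa(G)|$; $a_i(G)=\sum_{I\subseteq V(G),\,|I|=2i}a(G|_I)$. *)

theory Defs
  imports Main
begin

type_synonym 'a graph = "'a set \<times> 'a set set"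

definition verts :: "'a graph \<Rightarrow> 'a set" where "verts G = fst G"
definition edges :: "'a graph \<Rightarrow> 'a set set" where "edges G = snd G"

definition fin_simple_graph :: "'a graph \<Rightarrow> bool" where
  "fin_simple_graph G \<longleftrightarrow> finite (verts G) \<and>
     (\<forall>e\<in>edges G. e \<subseteq> verts G \<and> card e = 2)"

definition subgraph :: "'a graph \<Rightarrow> 'a graph \<Rightarrow> bool" where
  "subgraph H G \<longleftrightarrow> fin_simple_graph H \<and> fin_simple_graph G \<and>
     verts H \<subseteq> verts G \<and> edges H \<subseteq> edges G"

definition spanning_subgraph :: "'a graph \<Rightarrow> 'a graph \<Rightarrow> bool" where
  "spanning_subgraph H G \<longleftrightarrow> subgraph H G \<and> verts H = verts G"

definition induced :: "'a graph \<Rightarrow> 'a set \<Rightarrow> 'a graph" where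
  "induced G I = (I, {e \<in> edges G. e \<subseteq> I})"

definition adj :: "'a graph \<Rightarrow> 'a \<Rightarrow> 'a \<Rightarrow> bool" where
  "adj G u v \<longleftrightarrow> {u, v} \<in> edges G \<and> u \<in> verts G \<and> v \<in> verts G"

definition reach :: "'a graph \<Rightarrow> 'a \<Rightarrow> 'a \<Rightarrow> bool" where
  "reach G = (adj G)\<^sup>*\<^sup>*"

definition connected_graph :: "'a graph \<Rightarrow> bool" where
  "connected_graph G \<longleftrightarrow> (\<forall>u\<in>verts G. \<forall>v\<in>verts G. reach G u v)"

definition component :: "'a graph \<Rightarrow> 'a \<Rightarrow> 'a set" where
  "component G v = {u \<in> verts G. reach G v u}"

definition components :: "'a graph \<Rightarrow> 'a set set" where
  "components G = component G ` verts G"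

lemma adj_sym: "adj G u v \<Longrightarrow> adj G v u"
  unfolding adj_def by (simp add: insert_commute)

lemma reach_sym: "reach G u v \<Longrightarrow> reach G v u"
  unfolding reach_def
proof (induction rule: rtranclp_induct)
  case base then show ?case by simp
next
  case (step y z)
  then show ?case using adj_sym by (metis converse_rtranclp_into_rtranclp)
qed

lemma reach_trans: "reach G u v \<Longrightarrow> reach G v w \<Longrightarrow> reach G u w"
  unfolding reach_def by simp

lemma component_psubset:
  assumes "\<not> connected_graph G" "v \<in> verts G"
  shows "component G v \<subset> verts G"
proof -
  obtain a b where ab: "a \<in> verts G" "b \<in> verts G" "\<not> reach G a b"
    using assms(1) unfolding connected_graph_def by blast
  have "component G v \<noteq> verts G"
  proof
    assume "component G v = verts G"
    then have "reach G v a" "reach G v b" using ab unfolding component_def by blast+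
    then show False using ab reach_sym reach_trans by metis
  qed
  then show ?thesis unfolding component_def by blast
qed

text \<open>The signed a-number, by recursion on the number of vertices.
 (Value 0 on infinite vertex sets, which never occurs for finite graphs.)\<close>
function sa :: "'a graph \<Rightarrow> int" where
  "sa G = (if \<not> finite (verts G) then 0
           else if verts G = {} then 1
           else if connected_graph G then
             (if even (card (verts G))
              then - (\<Sum>I\<in>{I. I \<subset> verts G}. sa (induced G I))
              else 0)
           else (\<Prod>C\<in>components G. sa (induced G C)))"
  by pat_completeness auto
termination
proof (relation "measure (\<lambda>G. card (verts G))", goal_cases)
  case 1 then show ?case by simp
next
  case (2 G I) then show ?case by (simp add: induced_def verts_def psubset_card_mono)
next
  case (3 G C)
  then obtain v where v: "v \<in> verts G" "C = component G v"
    unfolding components_def by blast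
  have "C \<subset> verts G" using component_psubset[OF _ v(1)] 3 v(2) by blast
  then have "card C < card (verts G)" using 3 psubset_card_mono by blast
  then show ?case by (simp add: induced_def verts_def)
qed

definition a_num :: "'a graph \<Rightarrow> nat" where
  "a_num G = nat \<bar>sa G\<bar>"

definition a_i :: "'a graph \<Rightarrow> nat \<Rightarrow> nat" where
  "a_i G i = (\<Sum>I\<in>{I. I \<subseteq> verts G \<and> card I = 2 * i}. a_num (induced G I))"

end

theory Submission
  imports Defs
begin

text \<open>Call a graph even if all its components have even size, and let \<open>sa_rec G\<close> be
  \<open>- (\<Sum>I \<subset> V. sa (G|\<^sub>I))\<close>, which is \<open>sa G\<close> for even \<open>G\<close> (and \<open>sa G = 0\<close> otherwise).
  Then \<open>sa_rec (G|\<^sub>S)\<close> is the Moebius value \<open>\<mu>(\<emptyset>, S)\<close> of the family of vertex sets inducing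
  even subgraphs of \<open>G\<close>, ordered by inclusion.  Comparing this family for \<open>G\<close> and for \<open>G - e\<close>
  gives a deletion--contraction formula
  \<open>sa_rec G = sa_rec (G - e) + (\<Sum>S. sa_rec ((G - e)|\<^sub>S) * sa_rec (G / S))\<close>,
  where \<open>S\<close> runs over the proper nonempty vertex sets that are even in \<open>G\<close> but not in \<open>G - e\<close>.
  By induction on vertices and edges, \<open>(-1)^\<lceil>n/2\<rceil> * sa_rec G \<ge> 0\<close> whenever \<open>G\<close> is even
  or odd and connected, and every term of the formula has this same sign.  Hence \<open>\<bar>sa\<bar>\<close>
  can only grow when an edge is added, which gives the claim for spanning subgraphs; the
  claim for \<open>a\<^sub>i\<close> follows since every induced subgraph of \<open>H\<close> is a spanning subgraph of the
  corresponding induced subgraph of \<open>G\<close>.\<close>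

declare sa.simps [simp del]

lemma verts_induced [simp]: "verts (induced G I) = I"
  by (simp add: induced_def verts_def)

lemma edges_induced [simp]: "edges (induced G I) = {e \<in> edges G. e \<subseteq> I}"
  by (simp add: induced_def edges_def)

lemma induced_induced [simp]: "C \<subseteq> A \<Longrightarrow> induced (induced G A) C = induced G C"
  by (auto simp: induced_def verts_def edges_def)

lemma adj_induced: "adj (induced G T) x y \<longleftrightarrow> {x, y} \<in> edges G \<and> x \<in> T \<and> y \<in> T"
  by (auto simp: adj_def)

lemma adj_induced_verts [simp]: "adj (induced G (verts G)) = adj G"
  by (auto simp: adj_def fun_eq_iff)

lemma adj_induced_subset: "T \<subseteq> verts G \<Longrightarrow> adj (induced G T) x y \<longleftrightarrow> adj G x y \<and> x \<in> T \<and> y \<in> T"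
  by (auto simp: adj_def)

lemma adj_in_verts: "adj G x y \<Longrightarrow> x \<in> verts G \<and> y \<in> verts G"
  by (simp add: adj_def)

lemma fin_simple_graph_induced:
  "fin_simple_graph G \<Longrightarrow> T \<subseteq> verts G \<Longrightarrow> fin_simple_graph (induced G T)"
  unfolding fin_simple_graph_def by (auto intro: finite_subset)

lemma finite_edges: "fin_simple_graph G \<Longrightarrow> finite (edges G)"
  unfolding fin_simple_graph_def by (auto intro: finite_subset[of _ "Pow (verts G)"])

lemma fin_simple_graph_edgeE:
  assumes "fin_simple_graph G" "e \<in> edges G"
  obtains u v where "e = {u, v}" "u \<noteq> v" "u \<in> verts G" "v \<in> verts G"
proof -
  have "card e = 2" "e \<subseteq> verts G" using assms by (auto simp: fin_simple_graph_def)
  then show ?thesis using that by (auto simp: card_2_iff)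
qed

definition separated :: "'a graph \<Rightarrow> 'a set \<Rightarrow> bool" where
  "separated G U \<longleftrightarrow> U \<subseteq> verts G \<and> (\<forall>x\<in>U. \<forall>y\<in>verts G - U. \<not> adj G x y)"

text \<open>Separated sets are the unions of components, so this says that all components are even.\<close>

definition even_components :: "'a graph \<Rightarrow> bool" where
  "even_components G \<longleftrightarrow> (\<forall>U. separated G U \<longrightarrow> even (card U))"

definition odd_connected :: "'a graph \<Rightarrow> bool" where
  "odd_connected G \<longleftrightarrow> connected_graph G \<and> odd (card (verts G))"

lemma reach_refl [simp]: "reach G x x"
  by (simp add: reach_def)

lemma reach_step: "reach G x y \<Longrightarrow> adj G y z \<Longrightarrow> reach G x z"
  unfolding reach_def by (rule rtranclp.rtrancl_into_rtrancl)

lemma reach_mono: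
  assumes "\<And>x y. adj G x y \<Longrightarrow> adj G' x y" "reach G x y"
  shows "reach G' x y"
  using assms(2) unfolding reach_def
  by induction (auto dest: assms(1) intro: rtranclp.rtrancl_into_rtrancl[rotated])

lemma reach_induced_mono:
  assumes "reach (induced G T) x y" "T \<subseteq> T'"
  shows "reach (induced G T') x y"
  using assms(1) by (rule reach_mono[rotated]) (use assms(2) in \<open>auto simp: adj_induced\<close>)

lemma reach_in_separated:
  assumes "separated G U" "x \<in> U" "reach G x y"
  shows "y \<in> U"
  using assms(3) unfolding reach_def
proof induction
  case (step y z)
  then show ?case using assms(1) adj_in_verts[of G y z] by (auto simp: separated_def)
qed (use assms(2) in simp)

lemma reach_induced_separated:
  assumes "separated G U" "x \<in> U" "reach G x y"
  shows "reach (induced G U) x y"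
  using assms(3) unfolding reach_def
proof induction
  case (step y z)
  have "reach G x y" "reach G x z"
    using step(1,2) reach_step unfolding reach_def by auto
  then have "y \<in> U" "z \<in> U" using reach_in_separated[OF assms(1,2)] by blast+
  with step have "adj (induced G U) y z" by (auto simp: adj_def)
  with step show ?case by (simp add: rtranclp.rtrancl_into_rtrancl)
qed simp

lemma separated_verts: "separated G (verts G)"
  by (simp add: separated_def)

lemma separated_Diff: "separated G U \<Longrightarrow> separated G (verts G - U)"
  unfolding separated_def by (metis Diff_iff Diff_subset adj_sym)

lemma separated_Un: "separated G A \<Longrightarrow> separated G B \<Longrightarrow> separated G (A \<union> B)"
  unfolding separated_def by blast

lemma separated_induced_verts [simp]: "separated (induced G (verts G)) = separated G"
  by (simp add: separated_def fun_eq_iff)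

lemma separated_mono:
  assumes "verts H = verts G" "\<And>x y. adj H x y \<Longrightarrow> adj G x y" "separated G U"
  shows "separated H U"
  using assms unfolding separated_def by blast

lemma separated_Int:
  assumes "separated G U" "A \<subseteq> verts G"
  shows "separated (induced G A) (U \<inter> A)"
  using assms unfolding separated_def by (auto simp: adj_def)

lemma separated_induced_trans:
  assumes "separated G A" "separated (induced G A) U"
  shows "separated G U"
  unfolding separated_def
proof (intro conjI ballI)
  show "U \<subseteq> verts G" using assms by (auto simp: separated_def)
next
  fix x y assume "x \<in> U" "y \<in> verts G - U"
  moreover have "x \<in> A" using assms(2) \<open>x \<in> U\<close> by (auto simp: separated_def)
  ultimately show "\<not> adj G x y"
    using assms by (cases "y \<in> A") (auto simp: separated_def adj_def)
qed

lemma separated_component: "separated G (component G x)"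
  unfolding separated_def component_def using reach_step adj_in_verts by fastforce

lemma component_subset: "component G x \<subseteq> verts G"
  by (auto simp: component_def)

lemma in_component: "x \<in> verts G \<Longrightarrow> x \<in> component G x"
  by (simp add: component_def)

lemma component_eq_induced:
  assumes "separated G A" "v \<in> A"
  shows "component G v = component (induced G A) v"
proof -
  have "reach G v u" if "reach (induced G A) v u" for u
    using that by (rule reach_mono[rotated]) (use assms(1) in \<open>auto simp: adj_def separated_def\<close>)
  then show ?thesis
    using assms reach_in_separated[OF assms] reach_induced_separated[OF assms]
    unfolding component_def separated_def by auto
qed

lemma connected_component:
  assumes "x \<in> verts G"
  shows "connected_graph (induced G (component G x))"
  unfolding connected_graph_def
proof (intro ballI)
  fix a b assume "a \<in> verts (induced G (component G x))" "b \<in> verts (induced G (component G x))"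
  then have "reach (induced G (component G x)) x a" "reach (induced G (component G x)) x b"
    using reach_induced_separated[OF separated_component in_component[OF assms]]
    by (auto simp: component_def)
  then show "reach (induced G (component G x)) a b" using reach_sym reach_trans by metis
qed

lemma connected_separated:
  assumes "connected_graph G" "separated G U"
  shows "U = {} \<or> U = verts G"
proof -
  have "verts G \<subseteq> U" if "x \<in> U" for x
  proof
    fix y assume "y \<in> verts G"
    moreover have "x \<in> verts G" using that assms(2) by (auto simp: separated_def)
    ultimately show "y \<in> U"
      using assms reach_in_separated[OF assms(2) that] by (auto simp: connected_graph_def)
  qed
  then show ?thesis using assms(2) by (auto simp: separated_def)
qed

lemma connected_if_separated:
  assumes "\<And>U. separated G U \<Longrightarrow> U = {} \<or> U = verts G"
  shows "connected_graph G"
  unfolding connected_graph_def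
proof (intro ballI)
  fix u v assume u: "u \<in> verts G" and v: "v \<in> verts G"
  have "component G u = verts G"
    using assms[OF separated_component[of G u]] in_component[OF u] by blast
  with v show "reach G u v" by (auto simp: component_def)
qed

lemma connected_induced_verts [simp]: "connected_graph (induced G (verts G)) = connected_graph G"
  by (simp add: connected_graph_def reach_def)

lemma components_induced_verts [simp]: "components (induced G (verts G)) = components G"
  by (simp add: components_def component_def reach_def)

lemma even_components_induced_verts [simp]:
  "even_components (induced G (verts G)) = even_components G"
  by (simp add: even_components_def)

lemma even_components_card: "even_components G \<Longrightarrow> even (card (verts G))"
  using separated_verts[of G] unfolding even_components_def by blast

lemma even_components_empty: "verts G = {} \<Longrightarrow> even_components G"
  by (auto simp: even_components_def separated_def)

lemma even_components_if_connected:
  "connected_graph G \<Longrightarrow> even (card (verts G)) \<Longrightarrow> even_components G"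
  unfolding even_components_def using connected_separated by fastforce

lemma even_components_induced:
  "separated G A \<Longrightarrow> even_components G \<Longrightarrow> even_components (induced G A)"
  unfolding even_components_def using separated_induced_trans[of G A] by blast

lemma even_components_mono:
  assumes "verts H = verts G" "\<And>x y. adj H x y \<Longrightarrow> adj G x y" "even_components H"
  shows "even_components G"
  using assms(3) separated_mono[OF assms(1,2)] unfolding even_components_def by blast

lemma nontrivial_separatedE:
  assumes "\<not> connected_graph G" "verts G \<noteq> {}"
  obtains A where "separated G A" "A \<noteq> {}" "A \<subset> verts G"
proof -
  obtain v where v: "v \<in> verts G" using assms(2) by blast
  show ?thesis
  proof (rule that[OF separated_component])
    show "component G v \<noteq> {}" using in_component[OF v] by blast
    show "component G v \<subset> verts G" by (rule component_psubset[OF assms(1) v])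
  qed
qed

subsection \<open>Multiplicativity of the signed a-number\<close>

lemma sa_empty: "verts G = {} \<Longrightarrow> sa G = 1"
  by (subst sa.simps) simp

lemma components_subset: "C \<in> components G \<Longrightarrow> C \<subseteq> verts G"
  by (auto simp: components_def component_def)

lemma components_nonempty: "C \<in> components G \<Longrightarrow> C \<noteq> {}"
  by (auto simp: components_def component_def)

lemma components_induced_separated:
  "separated G A \<Longrightarrow> components (induced G A) = component G ` A"
  unfolding components_def by (rule image_cong) (simp_all add: component_eq_induced)

lemma sa_induced_verts [simp]: "sa (induced G (verts G)) = sa G"
proof -
  let ?H = "induced G (verts G)"
  have "(\<Sum>I | I \<subset> verts G. sa (induced ?H I)) = (\<Sum>I | I \<subset> verts G. sa (induced G I))"
    by (rule sum.cong) auto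
  moreover have "(\<Prod>C\<in>components G. sa (induced ?H C)) = (\<Prod>C\<in>components G. sa (induced G C))"
    by (rule prod.cong) (auto dest: components_subset)
  ultimately show ?thesis by (subst (1 2) sa.simps) simp
qed

lemma sa_components:
  assumes "finite (verts G)"
  shows "sa G = (\<Prod>C\<in>components G. sa (induced G C))"
proof (cases "connected_graph G \<and> verts G \<noteq> {}")
  case True
  then have "component G v = verts G" if "v \<in> verts G" for v
    using that by (auto simp: component_def connected_graph_def)
  then have "components G = {verts G}" using True by (auto simp: components_def)
  then show ?thesis by simp
next
  case False
  then show ?thesis using assms by (subst sa.simps) (auto simp: components_def)
qed

lemma sa_induced_components:
  assumes "finite A"
  shows "sa (induced G A) = (\<Prod>C\<in>components (induced G A). sa (induced G C))"
  using sa_components[of "induced G A"] assms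
  by (auto intro!: prod.cong dest: components_subset)

lemma sa_separated:
  assumes fin: "finite (verts G)" and A: "separated G A"
  shows "sa G = sa (induced G A) * sa (induced G (verts G - A))"
proof -
  let ?B = "verts G - A"
  have AV: "A \<subseteq> verts G" using A by (simp add: separated_def)
  have "components G = component G ` A \<union> component G ` ?B"
    using AV unfolding components_def by (metis Diff_partition image_Un)
  then have split: "components G = components (induced G A) \<union> components (induced G ?B)"
    by (simp add: components_induced_separated A separated_Diff)
  have "finite (components (induced G A))" "finite (components (induced G ?B))"
    using fin AV finite_subset by (auto simp: components_def)
  moreover have "components (induced G A) \<inter> components (induced G ?B) = {}"
    using components_subset[of _ "induced G A"] components_subset[of _ "induced G ?B"]
      components_nonempty[of _ "induced G A"]
    by fastforce
  ultimately have "sa G = (\<Prod>C\<in>components (induced G A). sa (induced G C))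
                        * (\<Prod>C\<in>components (induced G ?B). sa (induced G C))"
    unfolding sa_components[OF fin] split by (rule prod.union_disjoint)
  also have "\<dots> = sa (induced G A) * sa (induced G ?B)"
    using fin AV finite_subset[OF AV fin] by (simp add: sa_induced_components)
  finally show ?thesis .
qed

lemma sa_odd:
  assumes "finite (verts G)" "odd (card (verts G))"
  shows "sa G = 0"
  using assms
proof (induction "card (verts G)" arbitrary: G rule: less_induct)
  case less
  have ne: "verts G \<noteq> {}" using less.prems(2) by auto
  show ?case
  proof (cases "connected_graph G")
    case True
    then show ?thesis using less.prems ne by (subst sa.simps) simp
  next
    case False
    obtain A where A: "separated G A" "A \<noteq> {}" "A \<subset> verts G"
      using nontrivial_separatedE[OF False ne] .
    have finA: "finite A" using A(3) less.prems(1) finite_subset by blast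
    have "card A < card (verts G)" "card (verts G - A) < card (verts G)"
      using A(2,3) less.prems(1) by (auto intro!: psubset_card_mono)
    moreover have "card (verts G) = card A + card (verts G - A)"
      using A(3) finA less.prems(1) by (metis card_Diff_subset card_mono le_add_diff_inverse psubset_imp_subset)
    then have "odd (card A) \<or> odd (card (verts G - A))" using less.prems(2) by auto
    ultimately show ?thesis
      using less.hyps[of "induced G A"] less.hyps[of "induced G (verts G - A)"] finA less.prems(1)
        sa_separated[OF less.prems(1) A(1)]
      by auto
  qed
qed

lemma sa_not_even_components:
  assumes "finite (verts G)" "\<not> even_components G"
  shows "sa G = 0"
proof -
  obtain U where U: "separated G U" "odd (card U)"
    using assms(2) by (auto simp: even_components_def)
  then have "finite U" using assms(1) by (meson finite_subset separated_def)
  then show ?thesis using sa_separated[OF assms(1) U(1)] sa_odd[of "induced G U"] U(2) by simp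
qed

definition sa_sum :: "'a graph \<Rightarrow> int" where
  "sa_sum G = (\<Sum>I\<in>Pow (verts G). sa (induced G I))"

definition sa_rec :: "'a graph \<Rightarrow> int" where
  "sa_rec G = (if verts G = {} then 1 else - (\<Sum>I | I \<subset> verts G. sa (induced G I)))"

lemma sa_sum_eq:
  assumes "finite (verts G)"
  shows "sa_sum G = sa G + (\<Sum>I | I \<subset> verts G. sa (induced G I))"
proof -
  have "Pow (verts G) = insert (verts G) {I. I \<subset> verts G}" by auto
  moreover have "finite {I. I \<subset> verts G}"
    by (rule finite_subset[of _ "Pow (verts G)"]) (use assms in auto)
  ultimately show ?thesis unfolding sa_sum_def by simp
qed

lemma sa_induced_separated:
  assumes "finite (verts G)" "separated G A" "I \<subseteq> verts G"
  shows "sa (induced G I) = sa (induced G (I \<inter> A)) * sa (induced G (I - A))"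
proof -
  have "separated (induced G I) (A \<inter> I)" using separated_Int[OF assms(2,3)] .
  moreover have "finite I" using assms(1,3) finite_subset by blast
  moreover have "I - A \<inter> I = I - A" "A \<inter> I = I \<inter> A" by blast+
  ultimately show ?thesis using sa_separated[of "induced G I" "A \<inter> I"] by simp
qed

lemma sa_sum_separated:
  assumes fin: "finite (verts G)" and A: "separated G A"
  shows "sa_sum G = sa_sum (induced G A) * sa_sum (induced G (verts G - A))"
proof -
  let ?B = "verts G - A"
  have AV: "A \<subseteq> verts G" using A by (simp add: separated_def)
  have parts: "(J \<union> K) \<inter> A = J" "J \<union> K - A = K" if "J \<subseteq> A" "K \<subseteq> ?B" for J K
    using that by blast+
  have "sa_sum (induced G A) * sa_sum (induced G ?B)
        = (\<Sum>J\<in>Pow A. \<Sum>K\<in>Pow ?B. sa (induced G J) * sa (induced G K))"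
    unfolding sa_sum_def by (simp add: sum_product)
  also have "\<dots> = (\<Sum>(J, K)\<in>Pow A \<times> Pow ?B. sa (induced G J) * sa (induced G K))"
    by (simp add: sum.cartesian_product)
  also have "\<dots> = (\<Sum>I\<in>Pow (verts G). sa (induced G (I \<inter> A)) * sa (induced G (I - A)))"
    by (rule sum.reindex_bij_witness[of _ "\<lambda>I. (I \<inter> A, I - A)" "\<lambda>(J, K). J \<union> K"])
      (use AV in \<open>auto simp: parts\<close>)
  also have "\<dots> = sa_sum G"
    unfolding sa_sum_def by (rule sum.cong) (auto simp: sa_induced_separated[OF fin A])
  finally show ?thesis by simp
qed

lemma sa_sum_even_components:
  assumes "finite (verts G)" "even_components G" "verts G \<noteq> {}"
  shows "sa_sum G = 0"
  using assms
proof (induction "card (verts G)" arbitrary: G rule: less_induct)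
  case less
  show ?case
  proof (cases "connected_graph G")
    case True
    then show ?thesis
      using less.prems even_components_card[OF less.prems(2)]
      by (simp add: sa_sum_eq sa.simps[of G])
  next
    case False
    obtain A where A: "separated G A" "A \<noteq> {}" "A \<subset> verts G"
      using nontrivial_separatedE[OF False less.prems(3)] .
    have "finite A" "card A < card (verts G)"
      using A(3) less.prems(1) by (auto intro: finite_subset psubset_card_mono)
    then have "sa_sum (induced G A) = 0"
      using less.hyps[of "induced G A"] A(2) even_components_induced[OF A(1) less.prems(2)] by simp
    then show ?thesis using sa_sum_separated[OF less.prems(1) A(1)] by simp
  qed
qed

lemma sa_rec_even_components:
  assumes "finite (verts G)" "even_components G"
  shows "sa_rec G = sa G"
proof (cases "verts G = {}")
  case False
  then show ?thesis
    using sa_sum_even_components[OF assms False] sa_sum_eq[OF assms(1)] by (simp add: sa_rec_def)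
qed (simp add: sa_rec_def sa_empty)

lemma sa_rec_not_even_components:
  assumes "finite (verts G)" "\<not> even_components G"
  shows "sa_rec G = - sa_sum G"
  using assms sa_not_even_components[OF assms] sa_sum_eq[OF assms(1)] even_components_empty[of G]
  by (auto simp: sa_rec_def)

lemma sa_rec_odd: "finite (verts G) \<Longrightarrow> odd (card (verts G)) \<Longrightarrow> sa_rec G = - sa_sum G"
  using sa_rec_not_even_components even_components_card by blast

lemma sa_rec_induced_verts [simp]: "sa_rec (induced G (verts G)) = sa_rec G"
proof -
  have "(\<Sum>I | I \<subset> verts G. sa (induced (induced G (verts G)) I)) = (\<Sum>I | I \<subset> verts G. sa (induced G I))"
    by (rule sum.cong) auto
  then show ?thesis by (simp add: sa_rec_def)
qed

subsection \<open>Moebius functions of set families\<close>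

text \<open>The Moebius function of \<open>P\<close> under inclusion.  \<open>Y\<close> need not belong to \<open>P\<close>: then
  \<open>mu P X Y\<close> is the value \<open>Y\<close> would receive if it were added to \<open>P\<close>.\<close>

function mu :: "'a set set \<Rightarrow> 'a set \<Rightarrow> 'a set \<Rightarrow> int" where
  "mu P X Y = (if Y = X then 1 else if finite Y \<and> X \<subset> Y
      then - (\<Sum>Z\<in>{Z\<in>P. X \<subseteq> Z \<and> Z \<subset> Y}. mu P X Z) else 0)"
  by pat_completeness auto
termination
  by (relation "measure (\<lambda>(P, X, Y). card Y)") (auto intro: psubset_card_mono)

declare mu.simps [simp del]

lemma mu_refl [simp]: "mu P X X = 1"
  by (subst mu.simps) simp

lemma mu_step:
  "finite Y \<Longrightarrow> X \<subset> Y \<Longrightarrow> mu P X Y = - (\<Sum>Z\<in>{Z\<in>P. X \<subseteq> Z \<and> Z \<subset> Y}. mu P X Z)"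
  by (subst mu.simps) auto

lemma finite_psubsets: "finite Y \<Longrightarrow> finite {Z\<in>P. Q Z \<and> Z \<subset> Y}"
  by (rule finite_subset[of _ "Pow Y"]) auto

lemma mu_eqI:
  assumes fin: "finite Y0" and base: "g X = 1"
    and step: "\<And>Y. X \<subset> Y \<Longrightarrow> Y \<subseteq> Y0 \<Longrightarrow> g Y = - (\<Sum>Z\<in>{Z\<in>P. X \<subseteq> Z \<and> Z \<subset> Y}. g Z)"
  shows "X \<subseteq> Y \<Longrightarrow> Y \<subseteq> Y0 \<Longrightarrow> g Y = mu P X Y"
proof (induction "card Y" arbitrary: Y rule: less_induct)
  case less
  show ?case
  proof (cases "Y = X")
    case False
    then have XY: "X \<subset> Y" and finY: "finite Y" using less.prems fin finite_subset by auto
    have "(\<Sum>Z\<in>{Z\<in>P. X \<subseteq> Z \<and> Z \<subset> Y}. g Z) = (\<Sum>Z\<in>{Z\<in>P. X \<subseteq> Z \<and> Z \<subset> Y}. mu P X Z)"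
      using less.prems(2) finY by (intro sum.cong refl less.hyps) (auto intro: psubset_card_mono)
    then show ?thesis using step[OF XY less.prems(2)] mu_step[OF finY XY] by simp
  qed (simp add: base)
qed

lemma sum_mu_between:
  assumes "finite Y" "S \<in> P" "S \<subset> Y"
  shows "(\<Sum>Z\<in>{Z\<in>P. S \<subset> Z \<and> Z \<subset> Y}. mu P S Z) = - mu P S Y - 1"
proof -
  have "{Z\<in>P. S \<subseteq> Z \<and> Z \<subset> Y} = insert S {Z\<in>P. S \<subset> Z \<and> Z \<subset> Y}" using assms by auto
  then show ?thesis using mu_step[OF assms(1,3), of P] finite_psubsets[OF assms(1)] by simp
qed

lemma mu_subfamily:
  assumes finY: "finite Y" and QP: "Q \<subseteq> P" and XQ: "X \<in> Q" and XY: "X \<subset> Y"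
  shows "mu P X Y = mu Q X Y + (\<Sum>S\<in>{S\<in>P - Q. X \<subset> S \<and> S \<subset> Y}. mu Q X S * mu P S Y)"
proof -
  define g where "g Y = mu Q X Y + (\<Sum>S\<in>{S\<in>P - Q. X \<subset> S \<and> S \<subset> Y}. mu Q X S * mu P S Y)" for Y
  have "g Y = mu P X Y"
  proof (rule mu_eqI[OF finY _ _ psubset_imp_subset[OF XY] subset_refl])
    show "g X = 1" by (auto simp: g_def intro: sum.neutral)
  next
    fix Y' assume XY': "X \<subset> Y'" and "Y' \<subseteq> Y"
    then have finY': "finite Y'" using finY finite_subset by blast
    let ?A = "{Z\<in>P. X \<subseteq> Z \<and> Z \<subset> Y'}" and ?R = "{S\<in>P - Q. X \<subset> S \<and> S \<subset> Y'}"
    have "?A = {Z\<in>Q. X \<subseteq> Z \<and> Z \<subset> Y'} \<union> ?R" using QP XQ by blast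
    then have "(\<Sum>Z\<in>?A. mu Q X Z) = (\<Sum>Z\<in>{Z\<in>Q. X \<subseteq> Z \<and> Z \<subset> Y'}. mu Q X Z) + (\<Sum>S\<in>?R. mu Q X S)"
      by (simp only:) (rule sum.union_disjoint[OF finite_psubsets[OF finY'] finite_psubsets[OF finY']], blast)
    also have "\<dots> = - mu Q X Y' + (\<Sum>S\<in>?R. mu Q X S)"
      using mu_step[OF finY' XY', of Q] by simp
    finally have first: "(\<Sum>Z\<in>?A. mu Q X Z) = - mu Q X Y' + (\<Sum>S\<in>?R. mu Q X S)" .
    have "(\<Sum>Z\<in>?A. \<Sum>S\<in>{S\<in>P - Q. X \<subset> S \<and> S \<subset> Z}. mu Q X S * mu P S Z)
          = (\<Sum>Z\<in>?A. \<Sum>S\<in>{S. S \<in> ?R \<and> S \<subset> Z}. mu Q X S * mu P S Z)"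
      by (intro sum.cong refl arg_cong[where f = "\<lambda>A. sum _ A"]) auto
    also have "\<dots> = (\<Sum>S\<in>?R. \<Sum>Z\<in>{Z. Z \<in> ?A \<and> S \<subset> Z}. mu Q X S * mu P S Z)"
      by (intro sum.swap_restrict finite_psubsets[OF finY'])
    also have "\<dots> = (\<Sum>S\<in>?R. mu Q X S * (\<Sum>Z\<in>{Z\<in>P. S \<subset> Z \<and> Z \<subset> Y'}. mu P S Z))"
      unfolding sum_distrib_left by (intro sum.cong refl arg_cong[where f = "\<lambda>A. sum _ A"]) auto
    also have "\<dots> = (\<Sum>S\<in>?R. mu Q X S * (- mu P S Y' - 1))"
      using finY' by (intro sum.cong refl) (simp add: sum_mu_between)
    also have "\<dots> = - (\<Sum>S\<in>?R. mu Q X S * mu P S Y') - (\<Sum>S\<in>?R. mu Q X S)"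
      by (simp add: algebra_simps sum_subtractf sum_negf)
    finally have second: "(\<Sum>Z\<in>?A. \<Sum>S\<in>{S\<in>P - Q. X \<subset> S \<and> S \<subset> Z}. mu Q X S * mu P S Z)
        = - (\<Sum>S\<in>?R. mu Q X S * mu P S Y') - (\<Sum>S\<in>?R. mu Q X S)" .
    show "g Y' = - (\<Sum>Z\<in>?A. g Z)"
      unfolding g_def sum.distrib first second by simp
  qed
  then show ?thesis by (simp add: g_def)
qed

definition even_sets :: "'a graph \<Rightarrow> 'a set set" where
  "even_sets G = {T. T \<subseteq> verts G \<and> even_components (induced G T)}"

lemma empty_in_even_sets: "{} \<in> even_sets G"
  by (simp add: even_sets_def even_components_empty)

lemma sum_sa_even_sets:
  assumes "finite (verts G)" "S \<subseteq> verts G"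
  shows "(\<Sum>Z\<in>{Z\<in>even_sets G. Z \<subset> S}. sa (induced G Z)) = (\<Sum>Z | Z \<subset> S. sa (induced G Z))"
proof (rule sum.mono_neutral_left)
  show "finite {Z. Z \<subset> S}"
    by (rule finite_subset[of _ "Pow (verts G)"]) (use assms in auto)
  show "\<forall>Z\<in>{Z. Z \<subset> S} - {Z\<in>even_sets G. Z \<subset> S}. sa (induced G Z) = 0"
  proof
    fix Z assume "Z \<in> {Z. Z \<subset> S} - {Z\<in>even_sets G. Z \<subset> S}"
    moreover from this have "finite Z" using assms finite_subset[of Z "verts G"] by auto
    ultimately show "sa (induced G Z) = 0"
      using assms(2) by (auto simp: even_sets_def intro!: sa_not_even_components)
  qed
qed auto

lemma mu_even_sets:
  assumes fin: "finite (verts G)" and SV: "S \<subseteq> verts G"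
  shows "mu (even_sets G) {} S = sa_rec (induced G S)"
proof (rule mu_eqI[OF fin _ _ _ SV, symmetric])
  show "sa_rec (induced G {}) = 1" by (simp add: sa_rec_def)
next
  fix Y assume Y: "{} \<subset> Y" "Y \<subseteq> verts G"
  have "(\<Sum>Z\<in>{Z\<in>even_sets G. {} \<subseteq> Z \<and> Z \<subset> Y}. sa_rec (induced G Z))
        = (\<Sum>Z\<in>{Z\<in>even_sets G. Z \<subset> Y}. sa (induced G Z))"
    using fin finite_subset[of _ "verts G"]
    by (intro sum.cong) (auto simp: even_sets_def intro!: sa_rec_even_components)
  then show "sa_rec (induced G Y) = - (\<Sum>Z\<in>{Z\<in>even_sets G. {} \<subseteq> Z \<and> Z \<subset> Y}. sa_rec (induced G Z))"
    using Y sum_sa_even_sets[OF fin Y(2)] by (simp add: sa_rec_def)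
qed simp

subsection \<open>Contraction of a vertex set\<close>

definition contract :: "'a graph \<Rightarrow> 'a set \<Rightarrow> 'a graph" where
  "contract G S = (verts G - S, {{x, y} | x y. x \<in> verts G - S \<and> y \<in> verts G - S \<and> x \<noteq> y \<and>
     reach (induced G (S \<union> {x, y})) x y})"

lemma verts_contract [simp]: "verts (contract G S) = verts G - S"
  by (simp add: contract_def verts_def)

lemma adj_contract:
  "adj (contract G S) x y \<longleftrightarrow>
     x \<in> verts G - S \<and> y \<in> verts G - S \<and> x \<noteq> y \<and> reach (induced G (S \<union> {x, y})) x y"
proof
  assume "adj (contract G S) x y"
  then obtain a b where ab: "{x, y} = {a, b}" "a \<in> verts G - S" "b \<in> verts G - S" "a \<noteq> b"
    "reach (induced G (S \<union> {a, b})) a b"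
    by (auto simp: adj_def contract_def edges_def verts_def)
  then show "x \<in> verts G - S \<and> y \<in> verts G - S \<and> x \<noteq> y \<and> reach (induced G (S \<union> {x, y})) x y"
    using reach_sym[OF ab(5)] by (auto simp: doubleton_eq_iff insert_commute)
qed (auto simp: adj_def contract_def edges_def verts_def)

lemma fin_simple_graph_contract: "finite (verts G) \<Longrightarrow> fin_simple_graph (contract G S)"
  unfolding fin_simple_graph_def by (auto simp: contract_def edges_def verts_def)

lemma reach_induced_mem: "reach (induced G T) x y \<Longrightarrow> y = x \<or> y \<in> T"
  unfolding reach_def by (induction rule: rtranclp_induct) (auto simp: adj_def)

text \<open>Lifts a separated set \<open>U\<close> of \<open>contract G S\<close> to a separated set of \<open>G\<close>.\<close>

definition attached :: "'a graph \<Rightarrow> 'a set \<Rightarrow> 'a set \<Rightarrow> 'a set" where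
  "attached G S U = {y. \<exists>x\<in>U. reach (induced G (insert x S)) x y}"

lemma subset_attached: "U \<subseteq> attached G S U"
proof
  fix x assume "x \<in> U"
  moreover have "reach (induced G (insert x S)) x x" by simp
  ultimately show "x \<in> attached G S U" unfolding attached_def by blast
qed

lemma attached_subset: "attached G S U \<subseteq> U \<union> S"
  by (auto simp: attached_def dest: reach_induced_mem)

lemma separated_attached:
  assumes SZ: "S \<subseteq> Z" and ZV: "Z \<subseteq> verts G"
    and U: "separated (induced (contract G S) (Z - S)) U"
  shows "separated (induced G Z) (attached G S U)"
  unfolding separated_def
proof (intro conjI ballI notI)
  have UZ: "U \<subseteq> Z - S" using U by (simp add: separated_def)
  then show "attached G S U \<subseteq> verts (induced G Z)" using attached_subset[of G S U] SZ by auto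
  fix x y assume x: "x \<in> attached G S U" and y: "y \<in> verts (induced G Z) - attached G S U"
    and "adj (induced G Z) x y"
  then have xy: "{x, y} \<in> edges G" "y \<in> Z" by (auto simp: adj_induced)
  obtain x0 where x0: "x0 \<in> U" "reach (induced G (insert x0 S)) x0 x"
    using x by (auto simp: attached_def)
  have "x \<in> insert x0 S" using reach_induced_mem[OF x0(2)] by blast
  show False
  proof (cases "y \<in> S")
    case True
    then have "adj (induced G (insert x0 S)) x y"
      using xy \<open>x \<in> insert x0 S\<close> by (simp add: adj_induced)
    then have "reach (induced G (insert x0 S)) x0 y" by (rule reach_step[OF x0(2)])
    then show False using x0(1) y by (auto simp: attached_def)
  next
    case False
    have "reach (induced G (S \<union> {x0, y})) x0 x" by (rule reach_induced_mono[OF x0(2)]) auto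
    moreover have "adj (induced G (S \<union> {x0, y})) x y"
      using xy \<open>x \<in> insert x0 S\<close> by (auto simp: adj_induced)
    ultimately have reach: "reach (induced G (S \<union> {x0, y})) x0 y" by (rule reach_step)
    have "y \<notin> U" using y subset_attached[of U G S] by blast
    moreover have "Z - S \<subseteq> verts (contract G S)" using ZV by auto
    ultimately have "adj (induced (contract G S) (Z - S)) x0 y"
      using reach x0(1) UZ ZV False xy(2) by (auto simp: adj_induced_subset adj_contract)
    then show False using U x0(1) False xy(2) \<open>y \<notin> U\<close> by (auto simp: separated_def)
  qed
qed

lemma separated_contract_Diff:
  assumes SZ: "S \<subseteq> Z" and ZV: "Z \<subseteq> verts G" and U: "separated (induced G Z) U"
  shows "separated (induced (contract G S) (Z - S)) (U - S)"
  unfolding separated_def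
proof (intro conjI ballI notI)
  show "U - S \<subseteq> verts (induced (contract G S) (Z - S))" using U by (auto simp: separated_def)
  fix x y assume x: "x \<in> U - S" and y: "y \<in> verts (induced (contract G S) (Z - S)) - (U - S)"
    and "adj (induced (contract G S) (Z - S)) x y"
  moreover have "Z - S \<subseteq> verts (contract G S)" using ZV by auto
  ultimately have "reach (induced G (S \<union> {x, y})) x y"
    by (simp add: adj_induced_subset adj_contract)
  then have "reach (induced G Z) x y" by (rule reach_induced_mono) (use SZ x y U in \<open>auto simp: separated_def\<close>)
  then show False using reach_in_separated[OF U] x y by auto
qed

lemma even_components_contract_iff:
  assumes fin: "finite (verts G)" and SZ: "S \<subseteq> Z" and ZV: "Z \<subseteq> verts G"
    and S: "even_components (induced G S)"
  shows "even_components (induced G Z) \<longleftrightarrow> even_components (induced (contract G S) (Z - S))"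
proof
  assume Z: "even_components (induced G Z)"
  show "even_components (induced (contract G S) (Z - S))"
    unfolding even_components_def
  proof (intro allI impI)
    fix U assume U: "separated (induced (contract G S) (Z - S)) U"
    let ?K = "attached G S U"
    have K: "separated (induced G Z) ?K" by (rule separated_attached[OF SZ ZV U])
    have "separated (induced G S) (?K \<inter> S)" using separated_Int[OF K] SZ by simp
    then have "even (card (?K \<inter> S))" using S by (simp add: even_components_def)
    moreover have "even (card ?K)" using K Z by (simp add: even_components_def)
    moreover have "?K = U \<union> (?K \<inter> S)" "U \<inter> (?K \<inter> S) = {}"
      using subset_attached[of U G S] attached_subset[of G S U] U by (auto simp: separated_def)
    moreover have "finite ?K" using K fin ZV by (auto simp: separated_def intro: finite_subset)
    ultimately show "even (card U)" by (metis card_Un_disjoint even_add finite_Un)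
  qed
next
  assume ZS: "even_components (induced (contract G S) (Z - S))"
  show "even_components (induced G Z)"
    unfolding even_components_def
  proof (intro allI impI)
    fix U assume U: "separated (induced G Z) U"
    have "separated (induced G S) (U \<inter> S)" using separated_Int[OF U] SZ by simp
    then have "even (card (U \<inter> S))" using S by (simp add: even_components_def)
    moreover have "even (card (U - S))"
      using separated_contract_Diff[OF SZ ZV U] ZS by (simp add: even_components_def)
    moreover have "finite U" using U fin ZV by (auto simp: separated_def intro: finite_subset)
    ultimately show "even (card U)" by (metis card_Int_Diff even_add)
  qed
qed

lemma even_sets_contract_iff:
  assumes "finite (verts G)" "S \<in> even_sets G" "S \<subseteq> Z" "Z \<subseteq> verts G"
  shows "Z \<in> even_sets G \<longleftrightarrow> Z - S \<in> even_sets (contract G S)"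
  using assms even_components_contract_iff[OF assms(1,3,4)] by (auto simp: even_sets_def)

lemma even_components_contract:
  assumes "finite (verts G)" "even_components G" "S \<in> even_sets G"
  shows "even_components (contract G S)"
  using assms even_sets_contract_iff[OF assms(1,3) _ subset_refl]
    even_components_induced_verts[of "contract G S"]
  by (auto simp: even_sets_def)

lemma connected_contract:
  assumes G: "connected_graph G" and SV: "S \<subseteq> verts G"
  shows "connected_graph (contract G S)"
proof (rule connected_if_separated)
  fix U assume "separated (contract G S) U"
  then have U: "separated (induced (contract G S) (verts G - S)) U"
    using separated_induced_verts[of "contract G S"] by simp
  then have "separated G (attached G S U)"
    using separated_attached[OF SV subset_refl] by simp
  then have "attached G S U = {} \<or> attached G S U = verts G" by (rule connected_separated[OF G])
  then show "U = {} \<or> U = verts (contract G S)"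
    using subset_attached[of U G S] attached_subset[of G S U] U by (auto simp: separated_def)
qed

lemma mu_even_sets_contract:
  assumes fin: "finite (verts G)" and S: "S \<in> even_sets G" and ST: "S \<subseteq> T" and TV: "T \<subseteq> verts G"
  shows "mu (even_sets G) S T = mu (even_sets (contract G S)) {} (T - S)"
proof (rule mu_eqI[OF fin _ _ ST TV, symmetric])
  fix Y assume SY: "S \<subset> Y" and YV: "Y \<subseteq> verts G"
  let ?E = "even_sets (contract G S)"
  have "(\<Sum>Z\<in>{Z\<in>even_sets G. S \<subseteq> Z \<and> Z \<subset> Y}. mu ?E {} (Z - S))
        = (\<Sum>W\<in>{W\<in>?E. {} \<subseteq> W \<and> W \<subset> Y - S}. mu ?E {} W)"
  proof (rule sum.reindex_bij_witness[of _ "\<lambda>W. W \<union> S" "\<lambda>Z. Z - S"])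
    fix Z assume "Z \<in> {Z\<in>even_sets G. S \<subseteq> Z \<and> Z \<subset> Y}"
    then show "Z - S \<union> S = Z" "Z - S \<in> {W\<in>?E. {} \<subseteq> W \<and> W \<subset> Y - S}"
      using even_sets_contract_iff[OF fin S, of Z] YV by auto
  next
    fix W assume "W \<in> {W\<in>?E. {} \<subseteq> W \<and> W \<subset> Y - S}"
    moreover have "W \<union> S - S = W" using calculation by auto
    ultimately show "W \<union> S - S = W" "W \<union> S \<in> {Z\<in>even_sets G. S \<subseteq> Z \<and> Z \<subset> Y}"
      using even_sets_contract_iff[OF fin S, of "W \<union> S"] SY YV by auto
  qed simp
  moreover have "finite (Y - S)" "{} \<subset> Y - S" using SY finite_subset[OF YV fin] by auto
  ultimately show "mu ?E {} (Y - S) = - (\<Sum>Z\<in>{Z\<in>even_sets G. S \<subseteq> Z \<and> Z \<subset> Y}. mu ?E {} (Z - S))"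
    using mu_step[of "Y - S" "{}" ?E] by simp
qed simp

subsection \<open>Deletion of an edge\<close>

definition delete_edge :: "'a graph \<Rightarrow> 'a set \<Rightarrow> 'a graph" where
  "delete_edge G e = (verts G, edges G - {e})"

lemma verts_delete_edge [simp]: "verts (delete_edge G e) = verts G"
  by (simp add: delete_edge_def verts_def)

lemma edges_delete_edge [simp]: "edges (delete_edge G e) = edges G - {e}"
  by (simp add: delete_edge_def edges_def)

lemma adj_delete_edge: "adj (delete_edge G e) x y \<longleftrightarrow> adj G x y \<and> {x, y} \<noteq> e"
  by (auto simp: adj_def)

lemma fin_simple_graph_delete_edge: "fin_simple_graph G \<Longrightarrow> fin_simple_graph (delete_edge G e)"
  unfolding fin_simple_graph_def by auto

lemma induced_delete_edge: "e \<subseteq> T \<Longrightarrow> induced (delete_edge G e) T = delete_edge (induced G T) e"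
  by (auto simp: induced_def delete_edge_def verts_def edges_def)

lemma induced_delete_edge_not_subset: "\<not> e \<subseteq> T \<Longrightarrow> induced (delete_edge G e) T = induced G T"
  by (auto simp: induced_def delete_edge_def edges_def)

lemma even_sets_delete_edge_subset: "even_sets (delete_edge G e) \<subseteq> even_sets G"
  unfolding even_sets_def
  by (auto elim!: even_components_mono[rotated 2] simp: adj_induced)

lemma separated_delete_edge:
  assumes "separated (delete_edge G {u, v}) U" "u \<in> U \<longleftrightarrow> v \<in> U"
  shows "separated G U"
  using assms by (auto simp: separated_def adj_delete_edge doubleton_eq_iff)

definition contraction_sum :: "'a graph \<Rightarrow> 'a set \<Rightarrow> int" where
  "contraction_sum G e = (\<Sum>S\<in>{S\<in>even_sets G - even_sets (delete_edge G e). {} \<subset> S \<and> S \<subset> verts G}.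
     sa_rec (induced (delete_edge G e) S) * sa_rec (contract G S))"

lemma sa_rec_delete_edge:
  assumes fin: "finite (verts G)" and ne: "verts G \<noteq> {}"
  shows "sa_rec G = sa_rec (delete_edge G e) + contraction_sum G e"
proof -
  let ?P = "even_sets G" and ?Q = "even_sets (delete_edge G e)"
  have "mu ?P {} (verts G) = mu ?Q {} (verts G)
      + (\<Sum>S\<in>{S\<in>?P - ?Q. {} \<subset> S \<and> S \<subset> verts G}. mu ?Q {} S * mu ?P S (verts G))"
    using ne by (intro mu_subfamily fin even_sets_delete_edge_subset empty_in_even_sets) auto
  moreover have "mu ?Q {} S * mu ?P S (verts G) = sa_rec (induced (delete_edge G e) S) * sa_rec (contract G S)"
    if "S \<in> ?P" "S \<subseteq> verts G" for S
    using that fin mu_even_sets[of "delete_edge G e" S] mu_even_sets_contract[OF fin that(1) that(2)]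
      mu_even_sets[of "contract G S" "verts G - S"] sa_rec_induced_verts[of "contract G S"]
    by simp
  ultimately show ?thesis
    using fin mu_even_sets[of G "verts G"] mu_even_sets[of "delete_edge G e" "verts G"]
      sa_rec_induced_verts[of "delete_edge G e"]
    unfolding contraction_sum_def by (auto intro!: sum.cong simp: even_sets_def)
qed

lemma delete_edge_keeps_class:
  assumes e: "e = {u, v}" and uv: "reach (delete_edge G e) u v"
    and G: "even_components G \<or> odd_connected G"
  shows "even_components (delete_edge G e) \<or> odd_connected (delete_edge G e)"
proof -
  have sep: "separated G U" if "separated (delete_edge G e) U" for U
  proof (rule separated_delete_edge[of G u v U])
    show "separated (delete_edge G {u, v}) U" using that e by simp
    show "u \<in> U \<longleftrightarrow> v \<in> U"
      using reach_in_separated[OF that _ uv] reach_in_separated[OF that _ reach_sym[OF uv]] by blast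
  qed
  have "even_components (delete_edge G e)" if "even_components G"
    using that sep by (simp add: even_components_def)
  moreover have "connected_graph (delete_edge G e)" if "connected_graph G"
    using connected_separated[OF that sep] by (intro connected_if_separated) simp
  ultimately show ?thesis using G by (auto simp: odd_connected_def)
qed

lemma sa_sum_delete_edge_components:
  assumes fin: "finite (verts G)" and e: "e = {u, v}" "u \<in> verts G" "v \<in> verts G"
    and uv: "\<not> reach (delete_edge G e) u v"
  defines "C \<equiv> component (delete_edge G e) u" and "D \<equiv> component (delete_edge G e) v"
  shows "C \<inter> D = {}" and "separated G (verts G - C - D)"
    and "sa_sum (delete_edge G e) = sa_sum (induced (delete_edge G e) C)
           * sa_sum (induced (delete_edge G e) D) * sa_sum (induced G (verts G - C - D))"
proof -
  let ?H = "delete_edge G e" and ?R = "verts G - C - D"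
  have C: "separated ?H C" "u \<in> C" "C \<subseteq> verts G"
    using separated_component[of ?H u] in_component[of u ?H] component_subset[of ?H u] e(2)
    unfolding C_def by auto
  have D: "separated ?H D" "v \<in> D" "D \<subseteq> verts G"
    using separated_component[of ?H v] in_component[of v ?H] component_subset[of ?H v] e(3)
    unfolding D_def by auto
  have "separated ?H (C \<union> D)" using C(1) D(1) by (rule separated_Un)
  then have "separated G (C \<union> D)"
    using C(2) D(2) e(1) separated_delete_edge[of G u v "C \<union> D"] by blast
  moreover have "?R = verts G - (C \<union> D)" by blast
  ultimately show "separated G ?R" using separated_Diff by metis
  show "C \<inter> D = {}"
    using uv unfolding C_def D_def component_def by (blast intro: reach_trans reach_sym)
  then have DC: "D \<subseteq> verts G - C" using D(3) by blast
  then have "separated (induced ?H (verts G - C)) D"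
    using separated_Int[OF D(1), of "verts G - C"] by (simp add: Int_absorb2)
  then have "sa_sum (induced ?H (verts G - C)) = sa_sum (induced ?H D) * sa_sum (induced ?H ?R)"
    using sa_sum_separated[of "induced ?H (verts G - C)" D] fin DC by (simp add: Diff_subset)
  moreover have "induced ?H ?R = induced G ?R" using C(2) e(1) by (intro induced_delete_edge_not_subset) blast
  ultimately show "sa_sum ?H = sa_sum (induced ?H C) * sa_sum (induced ?H D) * sa_sum (induced G ?R)"
    using sa_sum_separated[of ?H C] fin C(1) by simp
qed

lemma sa_rec_delete_bridge:
  assumes fin: "finite (verts G)" and e: "e = {u, v}" "u \<in> verts G" "v \<in> verts G"
    and G: "even_components G \<or> odd_connected G"
    and H: "\<not> (even_components (delete_edge G e) \<or> odd_connected (delete_edge G e))"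
  obtains "sa_rec (delete_edge G e) = 0"
  | C where "C \<subseteq> verts G" "odd_connected (induced (delete_edge G e) C)"
      "odd_connected (induced (delete_edge G e) (verts G - C))"
      "sa_rec (delete_edge G e) =
         - (sa_rec (induced (delete_edge G e) C) * sa_rec (induced (delete_edge G e) (verts G - C)))"
proof -
  let ?H = "delete_edge G e"
  define C where "C = component ?H u"
  define D where "D = component ?H v"
  let ?R = "verts G - C - D"
  have uv: "\<not> reach ?H u v" using delete_edge_keeps_class[OF e(1) _ G] H by blast
  note split = sa_sum_delete_edge_components[OF fin e uv, folded C_def D_def]
  have C: "u \<in> C" "C \<subseteq> verts G" "connected_graph (induced ?H C)"
    using in_component[of u ?H] component_subset[of ?H u] connected_component[of u ?H] e(2)
    unfolding C_def by auto
  have D: "v \<in> D" "D \<subseteq> verts G" "connected_graph (induced ?H D)"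
    using in_component[of v ?H] component_subset[of ?H v] connected_component[of v ?H] e(3)
    unfolding D_def by auto
  have "finite C" "finite D" using C(2) D(2) fin finite_subset by auto
  have R: "?R = {} \<or> sa_sum (induced G ?R) = 0"
    using G
  proof
    assume "even_components G"
    then show ?thesis
      using even_components_induced[OF split(2)] fin sa_sum_even_components[of "induced G ?R"] by auto
  next
    assume "odd_connected G"
    then show ?thesis using connected_separated[OF _ split(2)] C(1) e(2) by (auto simp: odd_connected_def)
  qed
  have "odd (card C) \<or> sa_sum (induced ?H C) = 0" "odd (card D) \<or> sa_sum (induced ?H D) = 0"
    using C D \<open>finite C\<close> \<open>finite D\<close>
    by (auto intro!: sa_sum_even_components even_components_if_connected)
  moreover have rec_H: "sa_rec ?H = - sa_sum ?H" using sa_rec_not_even_components[of ?H] fin H by simp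
  ultimately show ?thesis
  proof (cases "?R = {} \<and> odd (card C) \<and> odd (card D)")
    case True
    then have "verts G - C = D" using split(1) D(2) by blast
    have odd: "odd_connected (induced ?H C)" "odd_connected (induced ?H D)"
      using C(3) D(3) True by (auto simp: odd_connected_def)
    then have "sa_rec (induced ?H C) = - sa_sum (induced ?H C)" "sa_rec (induced ?H D) = - sa_sum (induced ?H D)"
      using sa_rec_odd[of "induced ?H C"] sa_rec_odd[of "induced ?H D"] \<open>finite C\<close> \<open>finite D\<close>
      by (auto simp: odd_connected_def)
    moreover have "sa_sum (induced G ?R) = 1"
      using True by (simp only:) (simp add: sa_sum_def sa_empty)
    ultimately show ?thesis using that(2)[OF C(2)] odd split(3) rec_H \<open>verts G - C = D\<close> by simp
  qed (use that(1) R split(3) in auto)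
qed

subsection \<open>The sign of \<open>sa_rec\<close>\<close>

definition alt_sign :: "nat \<Rightarrow> int" where
  "alt_sign n = (-1) ^ ((n + 1) div 2)"

lemma abs_alt_sign [simp]: "\<bar>alt_sign n\<bar> = 1"
  by (simp add: alt_sign_def power_abs)

lemma alt_sign_add_even:
  assumes "even m"
  shows "alt_sign (m + n) = alt_sign m * alt_sign n"
proof -
  have "(m + n + 1) div 2 = (m + 1) div 2 + (n + 1) div 2" using assms by presburger
  then show ?thesis by (simp add: alt_sign_def power_add)
qed

lemma alt_sign_add_odd:
  assumes "odd m" "odd n"
  shows "alt_sign (m + n) = - (alt_sign m * alt_sign n)"
proof -
  have "(m + 1) div 2 + (n + 1) div 2 = Suc ((m + n + 1) div 2)" using assms by presburger
  then show ?thesis by (simp add: alt_sign_def power_add[symmetric])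
qed

lemma mult_sign_nonneg:
  fixes s t x y :: int
  assumes "0 \<le> s * x" "0 \<le> t * y"
  shows "0 \<le> (s * t) * (x * y)"
proof -
  have eq: "(s * t) * (x * y) = (s * x) * (t * y)" by (simp add: algebra_simps)
  show ?thesis unfolding eq by (rule mult_nonneg_nonneg[OF assms])
qed

lemma sa_rec_sign_edgeless:
  assumes E: "edges G = {}"
    and G: "even_components G \<or> odd_connected G"
  shows "0 \<le> alt_sign (card (verts G)) * sa_rec G"
proof -
  have "\<not> adj G x y" for x y using E by (simp add: adj_def)
  then have sep: "separated G {x}" if "x \<in> verts G" for x
    using that by (simp add: separated_def)
  show ?thesis
    using G
  proof
    assume "even_components G"
    then have "verts G = {}" using sep by (fastforce simp: even_components_def)
    then show ?thesis by (simp add: sa_rec_def alt_sign_def)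
  next
    assume "odd_connected G"
    then have "verts G \<noteq> {}" "connected_graph G" by (auto simp: odd_connected_def)
    then obtain x where "x \<in> verts G" "connected_graph G" by blast
    then have "verts G = {x}" using connected_separated[OF _ sep] by blast
    moreover have "{I. I \<subset> {x}} = {{}}" by auto
    ultimately show ?thesis by (simp add: sa_rec_def alt_sign_def sa_empty)
  qed
qed

text \<open>When the deletion leaves the class of graphs with even components or odd and connected,
  it cuts the graph into two odd components, whose signs are known by induction.\<close>

lemma sa_rec_delete_edge_sign:
  fixes G :: "'a graph"
  assumes fsg: "fin_simple_graph G" and eE: "e \<in> edges G"
    and G: "even_components G \<or> odd_connected G"
    and IH_delete: "even_components (delete_edge G e) \<or> odd_connected (delete_edge G e) \<Longrightarrow>
      0 \<le> alt_sign (card (verts G)) * sa_rec (delete_edge G e)"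
    and IH: "\<And>H :: 'a graph. fin_simple_graph H \<Longrightarrow> card (verts H) < card (verts G) \<Longrightarrow>
      even_components H \<or> odd_connected H \<Longrightarrow> 0 \<le> alt_sign (card (verts H)) * sa_rec H"
  shows "0 \<le> alt_sign (card (verts G)) * sa_rec (delete_edge G e)"
proof (cases "even_components (delete_edge G e) \<or> odd_connected (delete_edge G e)")
  case False
  have fin: "finite (verts G)" using fsg by (simp add: fin_simple_graph_def)
  obtain u v where e: "e = {u, v}" "u \<in> verts G" "v \<in> verts G"
    using fin_simple_graph_edgeE[OF fsg eE] by metis
  have sign: "0 \<le> alt_sign (card A) * sa_rec (induced (delete_edge G e) A)"
    if "A \<subset> verts G" "odd_connected (induced (delete_edge G e) A)" for A
  proof -
    have "fin_simple_graph (induced (delete_edge G e) A)"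
      using that(1) by (intro fin_simple_graph_induced fin_simple_graph_delete_edge fsg) auto
    then show ?thesis
      using IH[of "induced (delete_edge G e) A"] psubset_card_mono[OF fin that(1)] that(2) by simp
  qed
  show ?thesis
  proof (rule sa_rec_delete_bridge[OF fin e G False])
    fix C
    assume C: "C \<subseteq> verts G" "odd_connected (induced (delete_edge G e) C)"
      "odd_connected (induced (delete_edge G e) (verts G - C))"
      "sa_rec (delete_edge G e) =
         - (sa_rec (induced (delete_edge G e) C) * sa_rec (induced (delete_edge G e) (verts G - C)))"
    let ?D = "verts G - C"
    have "odd (card C)" "odd (card ?D)" using C(2,3) by (auto simp: odd_connected_def)
    then have "C \<noteq> {}" "?D \<noteq> {}" by (metis card.empty even_zero)+
    then have "C \<subset> verts G" "?D \<subset> verts G" using C(1) by auto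
    moreover have "card (verts G) = card C + card ?D"
      using C(1) fin by (metis card_Diff_subset card_mono finite_subset le_add_diff_inverse)
    ultimately show ?thesis
      using mult_sign_nonneg[OF sign sign] C \<open>odd (card C)\<close> \<open>odd (card ?D)\<close>
      by (simp add: alt_sign_add_odd)
  qed simp
qed (rule IH_delete)

lemma sa_rec_induced_delete_edge_sign:
  fixes G :: "'a graph"
  assumes fsg: "fin_simple_graph G" and eE: "e \<in> edges G" and SV: "S \<subseteq> verts G"
    and evS: "even_components (induced G S)"
    and nevS: "\<not> even_components (induced (delete_edge G e) S)"
    and IH: "\<And>H :: 'a graph. fin_simple_graph H \<Longrightarrow> card (verts H) < card (verts G) \<Longrightarrow>
      even_components H \<or> odd_connected H \<Longrightarrow> 0 \<le> alt_sign (card (verts H)) * sa_rec H"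
  shows "0 \<le> alt_sign (card S) * sa_rec (induced (delete_edge G e) S)"
proof -
  have fin: "finite (verts G)" using fsg by (simp add: fin_simple_graph_def)
  have "e \<subseteq> S"
  proof (rule ccontr)
    assume "\<not> e \<subseteq> S"
    then have "induced (delete_edge G e) S = induced G S" by (rule induced_delete_edge_not_subset)
    with nevS evS show False by simp
  qed
  then have delS: "induced (delete_edge G e) S = delete_edge (induced G S) e"
    by (rule induced_delete_edge)
  have "0 \<le> alt_sign (card (verts (induced G S))) * sa_rec (delete_edge (induced G S) e)"
  proof (rule sa_rec_delete_edge_sign)
    show "fin_simple_graph (induced G S)" using fin_simple_graph_induced[OF fsg SV] .
    show "e \<in> edges (induced G S)" using eE \<open>e \<subseteq> S\<close> by simp
    show "even_components (induced G S) \<or> odd_connected (induced G S)" using evS ..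
  next
    assume "even_components (delete_edge (induced G S) e) \<or> odd_connected (delete_edge (induced G S) e)"
    then show "0 \<le> alt_sign (card (verts (induced G S))) * sa_rec (delete_edge (induced G S) e)"
      using nevS even_components_card[OF evS] delS by (auto simp: odd_connected_def)
  next
    fix H :: "'a graph"
    assume "fin_simple_graph H" "card (verts H) < card (verts (induced G S))"
      "even_components H \<or> odd_connected H"
    then show "0 \<le> alt_sign (card (verts H)) * sa_rec H"
      using IH card_mono[OF fin SV] by simp
  qed
  then show ?thesis by (simp add: delS)
qed

lemma contraction_sum_sign:
  fixes G :: "'a graph"
  assumes fsg: "fin_simple_graph G" and eE: "e \<in> edges G"
    and G: "even_components G \<or> odd_connected G"
    and IH: "\<And>H :: 'a graph. fin_simple_graph H \<Longrightarrow> card (verts H) < card (verts G) \<Longrightarrow>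
      even_components H \<or> odd_connected H \<Longrightarrow> 0 \<le> alt_sign (card (verts H)) * sa_rec H"
  shows "0 \<le> alt_sign (card (verts G)) * contraction_sum G e"
  unfolding contraction_sum_def sum_distrib_left
proof (rule sum_nonneg)
  fix S assume "S \<in> {S\<in>even_sets G - even_sets (delete_edge G e). {} \<subset> S \<and> S \<subset> verts G}"
  then have SV: "S \<subset> verts G" and Sne: "S \<noteq> {}" and S: "S \<in> even_sets G"
    and evS: "even_components (induced G S)" and nevS: "\<not> even_components (induced (delete_edge G e) S)"
    by (auto simp: even_sets_def)
  have fin: "finite (verts G)" using fsg by (simp add: fin_simple_graph_def)
  have evenS: "even (card S)" using even_components_card[OF evS] by simp
  have cardS: "card (verts G) = card S + card (verts G - S)"
    using card_Diff_subset[OF finite_subset[OF _ fin]] card_mono[OF fin] SV by (simp add: psubset_imp_subset)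
  have "odd (card (verts G - S))" if "odd (card (verts G))" using that cardS evenS by presburger
  then have "even_components (contract G S) \<or> odd_connected (contract G S)"
    using G even_components_contract[OF fin _ S] connected_contract[of G S] SV
    by (auto simp: odd_connected_def)
  moreover have "card (verts (contract G S)) < card (verts G)"
    using psubset_card_mono[OF fin, of "verts G - S"] SV Sne by auto
  ultimately have "0 \<le> alt_sign (card (verts G - S)) * sa_rec (contract G S)"
    using IH[OF fin_simple_graph_contract[OF fin]] by simp
  then show "0 \<le> alt_sign (card (verts G)) * (sa_rec (induced (delete_edge G e) S) * sa_rec (contract G S))"
    using mult_sign_nonneg[OF sa_rec_induced_delete_edge_sign[OF fsg eE _ evS nevS IH]] SV cardS evenS
    by (simp add: alt_sign_add_even)
qed

text \<open>Deletion lowers the number of edges, contraction the number of vertices.\<close>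

theorem sa_rec_sign:
  assumes "fin_simple_graph G" "even_components G \<or> odd_connected G"
  shows "0 \<le> alt_sign (card (verts G)) * sa_rec G"
  using assms
proof (induction G rule: wf_induct[OF wf_measures[of "[\<lambda>G. card (verts G), \<lambda>G. card (edges G)]"]])
  case (1 G)
  have IH_verts: "0 \<le> alt_sign (card (verts H)) * sa_rec H"
    if "fin_simple_graph H" "card (verts H) < card (verts G)" "even_components H \<or> odd_connected H"
    for H :: "'a graph"
  proof -
    have "(H, G) \<in> measures [\<lambda>G. card (verts G), \<lambda>G. card (edges G)]" using that(2) by simp
    then show ?thesis using 1(1) that(1,3) by blast
  qed
  have IH_edges: "0 \<le> alt_sign (card (verts G)) * sa_rec H"
    if "fin_simple_graph H" "verts H = verts G" "card (edges H) < card (edges G)"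
      "even_components H \<or> odd_connected H"
    for H :: "'a graph"
  proof -
    have "(H, G) \<in> measures [\<lambda>G. card (verts G), \<lambda>G. card (edges G)]" using that(2,3) by simp
    then have "0 \<le> alt_sign (card (verts H)) * sa_rec H" using 1(1) that(1,4) by blast
    then show ?thesis using that(2) by simp
  qed
  have fin: "finite (verts G)" using 1(2) by (simp add: fin_simple_graph_def)
  show ?case
  proof (cases "edges G = {}")
    case True
    then show ?thesis using sa_rec_sign_edgeless[OF _ 1(3)] by simp
  next
    case False
    then obtain e where eE: "e \<in> edges G" by blast
    then have "verts G \<noteq> {}" using fin_simple_graph_edgeE[OF 1(2)] by blast
    have "card (edges (delete_edge G e)) < card (edges G)"
      using card_Diff1_less[OF finite_edges[OF 1(2)] eE] by simp
    then have "0 \<le> alt_sign (card (verts G)) * sa_rec (delete_edge G e)"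
      if "even_components (delete_edge G e) \<or> odd_connected (delete_edge G e)"
      using IH_edges[OF fin_simple_graph_delete_edge[OF 1(2)] _ _ that] by simp
    then have "0 \<le> alt_sign (card (verts G)) * sa_rec (delete_edge G e)"
      using IH_verts by (rule sa_rec_delete_edge_sign[OF 1(2) eE 1(3)])
    moreover have "0 \<le> alt_sign (card (verts G)) * contraction_sum G e"
      using IH_verts by (rule contraction_sum_sign[OF 1(2) eE 1(3)])
    moreover have "sa_rec G = sa_rec (delete_edge G e) + contraction_sum G e"
      using sa_rec_delete_edge[OF fin \<open>verts G \<noteq> {}\<close>] .
    ultimately show ?thesis by (simp add: distrib_left)
  qed
qed

subsection \<open>Monotonicity\<close>

lemma abs_le_abs_add_same_sign:
  fixes s x y :: int
  assumes "\<bar>s\<bar> = 1" "0 \<le> s * x" "0 \<le> s * y"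
  shows "\<bar>x\<bar> \<le> \<bar>x + y\<bar>"
proof -
  have "s = 1 \<or> s = -1" using assms(1) by (cases "0 \<le> s") auto
  then show ?thesis using assms(2,3) by auto
qed

lemma abs_sa_delete_edge_le:
  assumes fsg: "fin_simple_graph G" and eE: "e \<in> edges G"
    and ev: "even_components (delete_edge G e)"
  shows "\<bar>sa (delete_edge G e)\<bar> \<le> \<bar>sa G\<bar>"
proof -
  have fin: "finite (verts G)" using fsg by (simp add: fin_simple_graph_def)
  have evG: "even_components G"
    using ev by (rule even_components_mono[rotated 2]) (auto simp: adj_delete_edge)
  have "verts G \<noteq> {}" using eE fsg by (auto elim: fin_simple_graph_edgeE)
  then have "sa_rec G = sa_rec (delete_edge G e) + contraction_sum G e"
    by (rule sa_rec_delete_edge[OF fin])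
  moreover have "sa_rec G = sa G" by (rule sa_rec_even_components[OF fin evG])
  moreover have "sa_rec (delete_edge G e) = sa (delete_edge G e)"
    using sa_rec_even_components[of "delete_edge G e"] fin ev by simp
  ultimately have "sa G = sa (delete_edge G e) + contraction_sum G e" by simp
  moreover have "0 \<le> alt_sign (card (verts G)) * sa (delete_edge G e)"
    using sa_rec_sign[OF fin_simple_graph_delete_edge[OF fsg, of e]] ev
      sa_rec_even_components[of "delete_edge G e"] fin by simp
  moreover have "0 \<le> alt_sign (card (verts G)) * contraction_sum G e"
    using contraction_sum_sign[OF fsg eE] sa_rec_sign evG by blast
  ultimately show ?thesis using abs_le_abs_add_same_sign[OF abs_alt_sign] by simp
qed

lemma abs_sa_spanning_subgraph_le:
  assumes fsG: "fin_simple_graph G" and V: "verts H = verts G" and E: "edges H \<subseteq> edges G"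
  shows "\<bar>sa H\<bar> \<le> \<bar>sa G\<bar>"
  using fsG V E
proof (induction "card (edges G - edges H)" arbitrary: G rule: less_induct)
  case less
  show ?case
  proof (cases "edges G = edges H")
    case True
    then have "G = H" using less.prems(2) by (simp add: verts_def edges_def prod_eq_iff)
    then show ?thesis by simp
  next
    case False
    then obtain e where e: "e \<in> edges G" "e \<notin> edges H" using less.prems(3) by blast
    have "card (edges (delete_edge G e) - edges H) < card (edges G - edges H)"
      using e finite_edges[OF less.prems(1)] by (intro psubset_card_mono) auto
    moreover have "edges H \<subseteq> edges (delete_edge G e)" using less.prems(3) e(2) by auto
    ultimately have "\<bar>sa H\<bar> \<le> \<bar>sa (delete_edge G e)\<bar>"
      using less.hyps[OF _ fin_simple_graph_delete_edge[OF less.prems(1)]] less.prems(2) by simp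
    moreover have "\<bar>sa (delete_edge G e)\<bar> \<le> \<bar>sa G\<bar>" if "even_components (delete_edge G e)"
      using abs_sa_delete_edge_le[OF less.prems(1) e(1) that] .
    moreover have "sa H = 0" if "\<not> even_components (delete_edge G e)"
    proof -
      have "adj (delete_edge G e) x y" if "adj H x y" for x y
        using that less.prems(2,3) e(2) by (auto simp: adj_def)
      then have "\<not> even_components H"
        using that even_components_mono[of H "delete_edge G e"] less.prems(2) by auto
      then show ?thesis
        using sa_not_even_components[of H] less.prems(1,2) by (auto simp: fin_simple_graph_def)
    qed
    ultimately show ?thesis by (cases "even_components (delete_edge G e)") auto
  qed
qed

lemma a_num_spanning_subgraph_le:
  assumes "fin_simple_graph G" "verts H = verts G" "edges H \<subseteq> edges G"
  shows "a_num H \<le> a_num G"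
  using abs_sa_spanning_subgraph_le[OF assms] by (simp add: a_num_def nat_mono)

theorem mainTheorem9:
  fixes G H :: "'a graph"
  assumes "subgraph H G"
  shows "(\<forall>i. a_i H i \<le> a_i G i) \<and> (spanning_subgraph H G \<longrightarrow> a_num H \<le> a_num G)"
proof -
  have fsG: "fin_simple_graph G" and VH: "verts H \<subseteq> verts G" and EH: "edges H \<subseteq> edges G"
    using assms by (auto simp: subgraph_def)
  have induced_le: "a_num (induced H I) \<le> a_num (induced G I)" if "I \<subseteq> verts H" for I
    using that VH EH by (intro a_num_spanning_subgraph_le fin_simple_graph_induced[OF fsG]) auto
  have "a_i H i \<le> a_i G i" for i
  proof -
    have "a_i H i \<le> (\<Sum>I | I \<subseteq> verts H \<and> card I = 2 * i. a_num (induced G I))"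
      unfolding a_i_def by (rule sum_mono) (simp add: induced_le)
    also have "\<dots> \<le> a_i G i"
      unfolding a_i_def using fsG VH
      by (intro sum_mono2) (auto simp: fin_simple_graph_def intro: finite_subset[of _ "Pow (verts G)"])
    finally show ?thesis .
  qed
  moreover have "a_num H \<le> a_num G" if "spanning_subgraph H G"
    using that EH by (intro a_num_spanning_subgraph_le[OF fsG]) (auto simp: spanning_subgraph_def)
  ultimately show ?thesis by blast
qed

end
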